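(* Let $x\in(0,1)$ and let $\mu^{(x)}$ be the joint distribution of $(\zeta(x),\zeta(1))$ as in the context. Then the Hausdorff dimension of the measure $\mu^{(x)}$ satisfies $$\dim_{\mathrm{H}}\mu^{(x)}\ge2-\frac{\log(1+x)}{\log2}.$$
   Context: Let $(Q_n)_{n\ge1}$ be i.i.d. random variables taking values $0$ and $1$ with probability $1/2$ each, and independently let $(U_n)_{n\ge1}$ be i.i.d. uniform on $[0,1]$. For $y\in(0,1]$ let $T_n(y)=\sum_{j=1}^n\mathbbm{1}_{\{U_j\le y\}}$ (with $T_0(y)=0$) and $$\zeta(y)=\sum_{n=1}^\infty(1/2)^{T_{n-1}(y)}Q_n\mathbbm{1}_{\{U_n\le y\}}.$$ The Hausdorff dimension of a Borel probability measure $\mu$ on $\mathbb{R}^2$ is $\inf\{\dim_{\mathrm{H}}E: E\text{ Borel},\ \mu(E)=1\}$. *)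

theory Defs
  imports "HOL-Probability.Probability"
begin

definition hcost :: "real \<Rightarrow> 'a::metric_space set \<Rightarrow> real" where
  "hcost s U = (if U = {} then 0 else if s = 0 then 1 else diameter U powr s)"

definition hausdorff_pre :: "real \<Rightarrow> real \<Rightarrow> 'a::metric_space set \<Rightarrow> ennreal" where
  "hausdorff_pre s \<delta> E =
     Inf {(\<Sum>i. ennreal (hcost s (C i))) | C :: nat \<Rightarrow> 'a set.
            (\<forall>i. bounded (C i) \<and> diameter (C i) \<le> \<delta>) \<and> E \<subseteq> (\<Union>i. C i)}"

definition hausdorff_measure :: "real \<Rightarrow> 'a::metric_space set \<Rightarrow> ennreal" where
  "hausdorff_measure s E = (SUP \<delta>\<in>{0<..}. hausdorff_pre s \<delta> E)"

definition hausdorff_dim :: "'a::metric_space set \<Rightarrow> ereal" where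
  "hausdorff_dim E = Inf {ereal s | s. s \<ge> 0 \<and> hausdorff_measure s E = 0}"

definition hausdorff_dim_measure :: "'a::metric_space measure \<Rightarrow> ereal" where
  "hausdorff_dim_measure \<mu> =
     Inf {hausdorff_dim E | E. E \<in> sets borel \<and> emeasure \<mu> E = 1}"

definition Tcount :: "(nat \<Rightarrow> 'a \<Rightarrow> real) \<Rightarrow> nat \<Rightarrow> real \<Rightarrow> 'a \<Rightarrow> nat" where
  "Tcount U n y \<omega> = card {j \<in> {1..n}. U j \<omega> \<le> y}"

definition zeta :: "(nat \<Rightarrow> 'a \<Rightarrow> real) \<Rightarrow> (nat \<Rightarrow> 'a \<Rightarrow> real) \<Rightarrow> real \<Rightarrow> 'a \<Rightarrow> real" where
  "zeta Q U y \<omega> =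
     (\<Sum>m. (let n = Suc m in
            (1/2) ^ Tcount U (n - 1) y \<omega> * Q n \<omega> * (if U n \<omega> \<le> y then 1 else 0)))"

end

theory Submission
  imports Defs
begin

text \<open>
By the mass distribution principle it suffices to bound the law of (zeta x, zeta 1) by
c diam(C)^s, s = 2 - log2(1 + x), on all small sets C.  Covering C by a square of side
2^-k comparable to its diameter, it suffices that the vector lies in a fixed such square with
probability at most 16 ((1 + x)/4)^k = 16 (2^-k)^s.

The series zeta y is a binary expansion: if U n \<le> y and exactly j earlier indices m have
U m \<le> y, then Q n is the coefficient of 2^-j, up to a carry from the tail.  Hence locating zeta 1 to precision 2^-k
determines Q 1, ..., Q k (almost surely every U n \<le> 1), and locating zeta x determines Q n at
the first k indices with U n \<le> x, each up to 4 choices.  Given the set B of indices n \<le> N with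
U n \<le> x, at least 2k - |B \<inter> {1..k}| independent fair coins are thereby fixed, and averaging
2^-(2k - |B \<inter> {1..k}|) over B gives exactly ((1 + x)/4)^k.  Patterns with fewer than k
indices have vanishing probability as N tends to infinity.
\<close>

section \<open>The mass distribution principle\<close>

lemma ennreal_mult_Inf:
  assumes "S \<noteq> {}"
  shows "ennreal c * Inf S = (INF s\<in>S. ennreal c * s)"
proof (rule continuous_at_Inf_mono)
  show "mono ((*) (ennreal c))"
    by (auto intro!: monoI mult_left_mono)
  show "continuous (at_right (Inf S)) ((*) (ennreal c))"
    unfolding continuous_within by (intro ennreal_tendsto_cmult tendsto_ident_at) simp
qed (use assms in auto)

lemma hcost_nonneg: "0 \<le> hcost t C"
  by (simp add: hcost_def)

lemma diameter_powr_le_hcost: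
  assumes "bounded C" "diameter C \<le> 1" "0 \<le> t" "t \<le> s"
  shows "diameter C powr s \<le> hcost t C"
proof -
  have "0 \<le> diameter C" using diameter_ge_0[OF assms(1)] .
  then show ?thesis
    using assms by (auto simp: hcost_def powr_le1 intro: powr_mono')
qed

lemma emeasure_le_hcost_cover:
  fixes \<mu> :: "'a::metric_space measure"
  assumes sets: "sets \<mu> = sets borel" and fin: "finite_measure \<mu>"
    and holder: "\<And>C. closed C \<Longrightarrow> bounded C \<Longrightarrow> diameter C \<le> \<delta> \<Longrightarrow>
                   measure \<mu> C \<le> c * diameter C powr s"
    and "\<delta> \<le> 1" "0 < c" "0 \<le> t" "t \<le> s"
    and C: "\<And>i. bounded (C i)" "\<And>i. diameter (C i) \<le> \<delta>" and E: "E \<subseteq> (\<Union>i. C i)"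
  shows "emeasure \<mu> E \<le> ennreal c * (\<Sum>i. ennreal (hcost t (C i)))"
proof -
  have cl: "closure (C i) \<in> sets \<mu>" for i
    unfolding sets by (rule borel_closed) simp
  have "E \<subseteq> (\<Union>i. closure (C i))"
    using E closure_subset by blast
  then have "emeasure \<mu> E \<le> emeasure \<mu> (\<Union>i. closure (C i))"
    using cl by (intro emeasure_mono) auto
  also have "\<dots> \<le> (\<Sum>i. emeasure \<mu> (closure (C i)))"
    using cl by (intro emeasure_subadditive_countably) auto
  also have "\<dots> \<le> (\<Sum>i. ennreal c * ennreal (hcost t (C i)))"
  proof (intro suminf_le allI)
    fix i
    have "measure \<mu> (closure (C i)) \<le> c * diameter (C i) powr s"
      using holder[of "closure (C i)"] C by (simp add: diameter_closure bounded_closure)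
    also have "\<dots> \<le> c * hcost t (C i)"
      using C(1)[of i] order_trans[OF C(2)[of i] \<open>\<delta> \<le> 1\<close>] assms(5-7)
      by (intro mult_left_mono diameter_powr_le_hcost) auto
    finally show "emeasure \<mu> (closure (C i)) \<le> ennreal c * ennreal (hcost t (C i))"
      using \<open>0 < c\<close> hcost_nonneg[of t "C i"]
      by (simp add: finite_measure.emeasure_eq_measure[OF fin] ennreal_leI flip: ennreal_mult)
  qed auto
  also have "\<dots> = ennreal c * (\<Sum>i. ennreal (hcost t (C i)))"
    by (simp add: ennreal_suminf_cmult)
  finally show ?thesis .
qed

lemma emeasure_le_hausdorff_pre:
  fixes \<mu> :: "'a::metric_space measure"
  assumes "sets \<mu> = sets borel" "finite_measure \<mu>"
    and "\<And>C. closed C \<Longrightarrow> bounded C \<Longrightarrow> diameter C \<le> \<delta> \<Longrightarrow>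
           measure \<mu> C \<le> c * diameter C powr s"
    and "\<delta> \<le> 1" "0 < c" "0 \<le> t" "t \<le> s"
  shows "emeasure \<mu> E \<le> ennreal c * hausdorff_pre t \<delta> E"
proof -
  define covers where "covers = {(\<Sum>i. ennreal (hcost t (C i))) | C :: nat \<Rightarrow> 'a set.
            (\<forall>i. bounded (C i) \<and> diameter (C i) \<le> \<delta>) \<and> E \<subseteq> (\<Union>i. C i)}"
  have "emeasure \<mu> E \<le> ennreal c * S" if "S \<in> covers" for S
  proof -
    obtain C where C: "\<And>i. bounded (C i)" "\<And>i. diameter (C i) \<le> \<delta>" and E: "E \<subseteq> (\<Union>i. C i)"
      and S: "S = (\<Sum>i. ennreal (hcost t (C i)))"
      using \<open>S \<in> covers\<close> unfolding covers_def by blast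
    show ?thesis
      unfolding S by (rule emeasure_le_hcost_cover[OF assms C E])
  qed
  then have "emeasure \<mu> E \<le> ennreal c * Inf covers"
    using \<open>0 < c\<close> by (cases "covers = {}") (auto simp: ennreal_mult_Inf intro: INF_greatest)
  then show ?thesis
    by (simp add: hausdorff_pre_def covers_def)
qed

lemma emeasure_le_hausdorff_measure:
  fixes \<mu> :: "'a::metric_space measure"
  assumes "sets \<mu> = sets borel" "finite_measure \<mu>"
    and "\<And>C. closed C \<Longrightarrow> bounded C \<Longrightarrow> diameter C \<le> \<delta> \<Longrightarrow>
           measure \<mu> C \<le> c * diameter C powr s"
    and "0 < \<delta>" "\<delta> \<le> 1" "0 < c" "0 \<le> t" "t \<le> s"
  shows "emeasure \<mu> E \<le> ennreal c * hausdorff_measure t E"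
proof -
  have "hausdorff_pre t \<delta> E \<le> hausdorff_measure t E"
    unfolding hausdorff_measure_def using \<open>0 < \<delta>\<close> by (intro SUP_upper) simp
  then show ?thesis
    using emeasure_le_hausdorff_pre[OF assms(1-3,5-)] by (meson mult_left_mono order_trans zero_le)
qed

theorem mass_distribution_principle:
  fixes \<mu> :: "'a::metric_space measure"
  assumes "sets \<mu> = sets borel" "finite_measure \<mu>"
    and "\<And>C. closed C \<Longrightarrow> bounded C \<Longrightarrow> diameter C \<le> \<delta> \<Longrightarrow>
           measure \<mu> C \<le> c * diameter C powr s"
    and "0 < \<delta>" "\<delta> \<le> 1" "0 < c"
  shows "ereal s \<le> hausdorff_dim_measure \<mu>"
proof -
  have "ereal s \<le> hausdorff_dim E" if "emeasure \<mu> E = 1" for E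
    unfolding hausdorff_dim_def
  proof (rule Inf_greatest, clarify)
    fix t :: real assume "0 \<le> t" "hausdorff_measure t E = 0"
    show "ereal s \<le> ereal t"
    proof (rule ccontr)
      assume "\<not> ereal s \<le> ereal t"
      then have "emeasure \<mu> E \<le> ennreal c * hausdorff_measure t E"
        using assms \<open>0 \<le> t\<close> by (intro emeasure_le_hausdorff_measure) auto
      then show False
        using that \<open>hausdorff_measure t E = 0\<close> by simp
    qed
  qed
  then show ?thesis
    unfolding hausdorff_dim_measure_def by (auto intro: Inf_greatest)
qed

lemma half_power_between:
  assumes "0 < r" "r \<le> 1"
  obtains k where "r \<le> (1/2::real)^k" "(1/2::real)^k < 2 * r"
proof -
  have ex: "\<exists>m. (1/2::real)^m < r"
    using real_arch_pow_inv[OF \<open>0 < r\<close>] by simp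
  define m where "m = (LEAST m. (1/2::real)^m < r)"
  have m: "(1/2::real)^m < r"
    unfolding m_def using ex by (rule LeastI_ex)
  then have "m \<noteq> 0"
    using \<open>r \<le> 1\<close> by (intro notI) simp
  then obtain k where k: "m = Suc k"
    using not0_implies_Suc by blast
  have "r \<le> (1/2)^k"
    using not_less_Least[of k "\<lambda>m. (1/2::real)^m < r"] k by (simp add: m_def)
  moreover have "(1/2::real)^k < 2 * r"
    using m k by simp
  ultimately show thesis by (rule that)
qed

lemma bounded_subset_square:
  fixes C :: "(real \<times> real) set"
  assumes "bounded C" "C \<noteq> {}" "2 * diameter C \<le> r"
  obtains a b where "C \<subseteq> {a..a+r} \<times> {b..b+r}"
proof -
  obtain p where p: "p \<in> C" using assms by auto
  have "C \<subseteq> {fst p - diameter C..fst p - diameter C + r} \<times> {snd p - diameter C..snd p - diameter C + r}"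
  proof safe
    fix y z assume "(y, z) \<in> C"
    then have "dist (y, z) p \<le> diameter C"
      using diameter_bounded_bound[OF \<open>bounded C\<close> _ p] by blast
    then have "dist y (fst p) \<le> diameter C" "dist z (snd p) \<le> diameter C"
      using dist_fst_le[of "(y, z)" p] dist_snd_le[of "(y, z)" p] by auto
    then show "y \<in> {fst p - diameter C..fst p - diameter C + r}"
      and "z \<in> {snd p - diameter C..snd p - diameter C + r}"
      using assms(3) by (auto simp: dist_real_def abs_le_iff)
  qed
  then show thesis by (rule that)
qed

lemma power_powr_swap: "0 < (x::real) \<Longrightarrow> (x ^ k) powr s = (x powr s) ^ k"
  by (simp add: powr_realpow[symmetric] powr_powr mult.commute)

lemma measure_le_diameter_powr_of_squares:
  fixes \<mu> :: "(real \<times> real) measure"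
  assumes fin: "finite_measure \<mu>" and sets: "sets \<mu> = sets borel"
    and squares: "\<And>a b k. measure \<mu> ({a..a+(1/2)^k} \<times> {b..b+(1/2)^k}) \<le> K * ((1/2)^k) powr s"
    and "0 < s" "0 \<le> K"
    and C: "bounded C" "diameter C \<le> 1/2"
  shows "measure \<mu> C \<le> K * 4 powr s * diameter C powr s"
proof (cases "C = {}")
  case False
  have in_square: "measure \<mu> C \<le> K * ((1/2)^k) powr s" if k: "2 * diameter C \<le> (1/2)^k" for k
  proof -
    obtain a b where "C \<subseteq> {a..a+(1/2)^k} \<times> {b..b+(1/2)^k}"
      using bounded_subset_square[OF C(1) False k] .
    then have "measure \<mu> C \<le> measure \<mu> ({a..a+(1/2)^k} \<times> {b..b+(1/2)^k})"
      by (intro finite_measure.finite_measure_mono[OF fin]) (auto simp: sets intro: borel_closed closed_Times)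
    then show ?thesis using squares by (rule order_trans)
  qed
  show ?thesis
  proof (cases "diameter C = 0")
    case True
    have "(\<lambda>k. K * ((1/2) powr s)^k) \<longlonglongrightarrow> K * 0"
      using \<open>0 < s\<close>
      by (intro tendsto_mult tendsto_const LIMSEQ_power_zero) (auto simp: powr01_less_one)
    moreover have "((1/2::real)^k) powr s = ((1/2) powr s)^k" for k
      by (rule power_powr_swap) simp
    ultimately have "(\<lambda>k. K * ((1/2)^k) powr s) \<longlonglongrightarrow> K * 0"
      by simp
    then have "measure \<mu> C \<le> 0"
      using in_square True by (intro LIMSEQ_le_const) auto
    then show ?thesis using True \<open>0 < s\<close> by simp
  next
    case False
    then have "0 < 2 * diameter C"
      using diameter_ge_0[OF C(1)] by simp
    then obtain k where k: "2 * diameter C \<le> (1/2)^k" "(1/2::real)^k < 4 * diameter C"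
      using half_power_between[of "2 * diameter C"] C(2) by auto
    have "measure \<mu> C \<le> K * ((1/2)^k) powr s"
      using in_square[OF k(1)] .
    also have "\<dots> \<le> K * (4 * diameter C) powr s"
      using k \<open>0 < s\<close> \<open>0 \<le> K\<close> by (intro mult_left_mono powr_mono2) auto
    finally show ?thesis
      using diameter_ge_0[OF C(1)] by (simp add: powr_mult)
  qed
qed (use \<open>0 \<le> K\<close> in simp)

lemma half_powr_two_minus_log: "0 < c \<Longrightarrow> (1/2::real) powr (2 - ln c / ln 2) = c / 4"
proof -
  assume "0 < c"
  have "(1/2::real) powr (2 - ln c / ln 2) = exp (ln c - 2 * ln 2)"
    by (simp add: powr_def ln_div field_simps)
  also have "\<dots> = c / 4"
    using \<open>0 < c\<close> by (simp add: exp_diff exp_double)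
  finally show ?thesis .
qed

section \<open>\<open>\<zeta>\<close> as a binary expansion\<close>

definition hits :: "(nat \<Rightarrow> real) \<Rightarrow> real \<Rightarrow> nat \<Rightarrow> nat" where
  "hits u y m = card {j\<in>{1..m}. u j \<le> y}"

lemma hits_0 [simp]: "hits u y 0 = 0"
  by (simp add: hits_def)

lemma hits_Suc: "hits u y (Suc m) = hits u y m + (if u (Suc m) \<le> y then 1 else 0)"
proof -
  have "{j\<in>{1..Suc m}. u j \<le> y} = {j\<in>{1..m}. u j \<le> y} \<union> (if u (Suc m) \<le> y then {Suc m} else {})"
    by (auto simp: le_Suc_eq)
  then show ?thesis by (simp add: hits_def)
qed

lemma hits_mono: "m \<le> m' \<Longrightarrow> hits u y m \<le> hits u y m'"
  unfolding hits_def by (rule card_mono) auto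

lemma hits_all: "(\<And>n. 1 \<le> n \<Longrightarrow> u n \<le> y) \<Longrightarrow> hits u y m = m"
proof -
  assume "\<And>n. 1 \<le> n \<Longrightarrow> u n \<le> y"
  then have "{j\<in>{1..m}. u j \<le> y} = {1..m}"
    by auto
  then show ?thesis
    by (simp add: hits_def)
qed

lemma hits_eq_card: "m \<le> N \<Longrightarrow> hits u y m = card ({n\<in>{1..N}. u n \<le> y} \<inter> {1..m})"
  unfolding hits_def by (intro arg_cong[where f=card]) auto

definition zeta_term :: "(nat \<Rightarrow> real) \<Rightarrow> (nat \<Rightarrow> real) \<Rightarrow> real \<Rightarrow> nat \<Rightarrow> real" where
  "zeta_term q u y m = (1/2)^hits u y m * q (Suc m) * (if u (Suc m) \<le> y then 1 else 0)"

definition zeta_seq :: "(nat \<Rightarrow> real) \<Rightarrow> (nat \<Rightarrow> real) \<Rightarrow> real \<Rightarrow> real" where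
  "zeta_seq q u y = (\<Sum>m. zeta_term q u y m)"

lemma zeta_eq_zeta_seq: "zeta Q U y \<omega> = zeta_seq (\<lambda>n. Q n \<omega>) (\<lambda>n. U n \<omega>) y"
  by (simp add: zeta_def zeta_seq_def zeta_term_def hits_def Tcount_def)

definition binary_seq :: "(nat \<Rightarrow> real) \<Rightarrow> bool" where
  "binary_seq q \<longleftrightarrow> (\<forall>n\<ge>1. q n \<in> {0, 1})"

lemma binary_seqD: "binary_seq q \<Longrightarrow> q (Suc m) = 0 \<or> q (Suc m) = 1"
  by (auto simp: binary_seq_def)

lemma binary_seq_one: "binary_seq (\<lambda>_. 1)"
  by (simp add: binary_seq_def)

lemma sum_zeta_term_one:
  "n \<le> N \<Longrightarrow> (\<Sum>m\<in>{n..<N}. zeta_term (\<lambda>_. 1) u y m) = 2 * (1/2)^hits u y n - 2 * (1/2)^hits u y N"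
  by (induction N rule: dec_induct) (auto simp: zeta_term_def hits_Suc)

lemma zeta_term_nonneg: "binary_seq q \<Longrightarrow> 0 \<le> zeta_term q u y m"
  using binary_seqD[of q m] by (auto simp: zeta_term_def)

lemma zeta_term_le_one: "binary_seq q \<Longrightarrow> zeta_term q u y m \<le> zeta_term (\<lambda>_. 1) u y m"
  using binary_seqD[of q m] by (auto simp: zeta_term_def)

lemma summable_zeta_term:
  assumes "binary_seq q"
  shows "summable (zeta_term q u y)"
proof (rule summable_comparison_test')
  show "summable (zeta_term (\<lambda>_. 1) u y)"
  proof (rule summableI_nonneg_bounded)
    show "(\<Sum>m<n. zeta_term (\<lambda>_. 1) u y m) \<le> 2" for n
      using sum_zeta_term_one[of 0 n u y] by (simp add: atLeast0LessThan)
  qed (rule zeta_term_nonneg[OF binary_seq_one])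
qed (use assms zeta_term_nonneg zeta_term_le_one in auto)

text \<open>The contribution of the first k selected indices, which carry the exponents 0, ..., k - 1.\<close>

definition zeta_trunc :: "(nat \<Rightarrow> real) \<Rightarrow> (nat \<Rightarrow> real) \<Rightarrow> real \<Rightarrow> nat \<Rightarrow> nat \<Rightarrow> real" where
  "zeta_trunc q u y k N = (\<Sum>m<N. if hits u y m < k then zeta_term q u y m else 0)"

lemma sum_zeta_term_one_above_level:
  "(\<Sum>m<M. if k \<le> hits u y m then zeta_term (\<lambda>_. 1) u y m else 0)
     \<le> 2 * (1/2)^k - 2 * (1/2)^max k (hits u y M)"
  by (induction M) (auto simp: zeta_term_def hits_Suc max_def le_Suc_eq)

lemma zeta_trunc_approx:
  assumes q: "binary_seq q" and k: "k \<le> hits u y N"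
  shows "zeta_trunc q u y k N \<le> zeta_seq q u y"
    and "zeta_seq q u y \<le> zeta_trunc q u y k N + 2 * (1/2)^k"
proof -
  define f where "f m = (if hits u y m < k then zeta_term q u y m else 0)" for m
  define g where "g m = (if k \<le> hits u y m then zeta_term q u y m else 0)" for m
  have summable: "summable f" "summable g"
    using q by (auto intro!: summable_comparison_test'[OF summable_zeta_term[OF q]]
        simp: f_def g_def zeta_term_nonneg)
  have "zeta_seq q u y = (\<Sum>m. f m + g m)"
    unfolding zeta_seq_def by (intro suminf_cong) (simp add: f_def g_def)
  also have "\<dots> = suminf f + suminf g"
    using summable by (rule suminf_add[symmetric])
  also have "suminf f = zeta_trunc q u y k N"
  proof -
    have "f m = 0" if "m \<notin> {..<N}" for m
      using that k hits_mono[of N m u y] by (simp add: f_def)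
    then show ?thesis
      by (subst suminf_finite[of "{..<N}"]) (auto simp: zeta_trunc_def f_def)
  qed
  finally have split: "zeta_seq q u y = zeta_trunc q u y k N + suminf g" .
  have "0 \<le> suminf g"
    using summable q by (intro suminf_nonneg) (auto simp: g_def zeta_term_nonneg)
  moreover have "suminf g \<le> 2 * (1/2)^k"
  proof (rule suminf_le_const[OF summable(2)])
    fix n
    have "(\<Sum>m<n. g m) \<le> (\<Sum>m<n. if k \<le> hits u y m then zeta_term (\<lambda>_. 1) u y m else 0)"
      using q by (intro sum_mono) (simp add: g_def zeta_term_le_one)
    also have "\<dots> \<le> 2 * (1/2)^k"
      using sum_zeta_term_one_above_level[where M=n and k=k and u=u and y=y] by (rule order_trans) simp
    finally show "(\<Sum>m<n. g m) \<le> 2 * (1/2)^k" .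
  qed
  ultimately show "zeta_trunc q u y k N \<le> zeta_seq q u y"
    and "zeta_seq q u y \<le> zeta_trunc q u y k N + 2 * (1/2)^k"
    using split by simp_all
qed

lemma half_power_mult_power: "h \<le> j \<Longrightarrow> (1/2::real)^h * 2^j = 2^(j - h)"
  by (simp add: power_one_over power_diff)

lemma zeta_trunc_grid:
  assumes "binary_seq q"
  shows "zeta_trunc q u y k N * 2^k \<in> \<int>"
proof -
  have "(if hits u y m < k then zeta_term q u y m else 0) * 2^k \<in> \<int>" for m
    using binary_seqD[OF assms, of m]
    by (auto simp: zeta_term_def mult.commute[of _ "q _"] mult.assoc half_power_mult_power)
  then show ?thesis
    unfolding zeta_trunc_def sum_distrib_right by (intro Ints_sum)
qed

definition binary_digit :: "real \<Rightarrow> nat \<Rightarrow> real" where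
  "binary_digit r e = of_int (\<lfloor>r * 2^e\<rfloor> mod 2)"

lemma binary_digit_eqI:
  assumes "r * 2^e = 2 * z + d + s" "z \<in> \<int>" "d \<in> {0, 1}" "0 \<le> s" "s < 1"
  shows "binary_digit r e = d"
proof -
  obtain n where n: "z = of_int n" using \<open>z \<in> \<int>\<close> by (auto elim: Ints_cases)
  obtain i :: int where i: "d = of_int i" "i \<in> {0, 1}" using \<open>d \<in> {0, 1}\<close> by force
  have "\<lfloor>r * 2^e\<rfloor> = 2 * n + i"
    unfolding floor_eq_iff using assms(1,4,5) n i(1) by simp
  then show ?thesis
    using i by (auto simp: binary_digit_def)
qed

lemma sum_zeta_term_one_tail_less:
  assumes "Suc p \<le> N" "u (Suc p) \<le> y"
  shows "(\<Sum>m\<in>{Suc p..<N}. zeta_term (\<lambda>_. 1) u y m) < (1/2)^hits u y p"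
  using sum_zeta_term_one[OF assms(1), of u y] assms(2) by (simp add: hits_Suc)

lemma zeta_term_scaled_even:
  assumes "binary_seq q" "m < p"
  shows "zeta_term q u y m * 2^hits u y p / 2 \<in> \<int>"
proof (cases "u (Suc m) \<le> y")
  case True
  have "hits u y (Suc m) \<le> hits u y p"
    using assms(2) by (simp add: hits_mono)
  then have "Suc (hits u y m) \<le> hits u y p"
    using True by (simp add: hits_Suc)
  then have "(1/2::real)^hits u y m * 2^hits u y p / 2 = 2^(hits u y p - Suc (hits u y m))"
    using half_power_mult_power[of "Suc (hits u y m)" "hits u y p"] by simp
  then show ?thesis
    using binary_seqD[OF assms(1), of m] True
    by (auto simp: zeta_term_def mult.commute[of _ "q _"] mult.assoc)
qed (simp add: zeta_term_def)

lemma binary_digit_zeta_trunc: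
  assumes q: "binary_seq q" and p: "Suc p \<le> N" "u (Suc p) \<le> y" "hits u y p < k"
  shows "q (Suc p) = binary_digit (zeta_trunc q u y k N) (hits u y p)"
proof -
  define j where "j = hits u y p"
  define g where "g m = (if hits u y m < k then zeta_term q u y m else 0) * 2^j" for m
  txt \<open>Scaled by 2^j, the terms before p are even integers, the term at p is q (Suc p), and
    the tail lies in [0, 1).\<close>
  have split: "{..<N} = {..<p} \<union> {p} \<union> {Suc p..<N}"
    using p by auto
  have "zeta_trunc q u y k N * 2^j = (\<Sum>m<N. g m)"
    by (simp add: zeta_trunc_def g_def sum_distrib_right)
  also have "\<dots> = (\<Sum>m<p. g m) + g p + (\<Sum>m\<in>{Suc p..<N}. g m)"
    unfolding split by (subst sum.union_disjoint, auto)+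
  finally have decomp: "zeta_trunc q u y k N * 2^j = (\<Sum>m<p. g m) + g p + (\<Sum>m\<in>{Suc p..<N}. g m)" .
  have even: "(\<Sum>m<p. g m) / 2 \<in> \<int>"
    unfolding sum_divide_distrib using zeta_term_scaled_even[OF q]
    by (intro Ints_sum) (simp add: g_def j_def)
  have digit: "g p = q (Suc p)"
    using p by (simp add: g_def zeta_term_def j_def power_one_over)
  have "0 \<le> (\<Sum>m\<in>{Suc p..<N}. g m)"
    using q by (intro sum_nonneg) (simp add: g_def zeta_term_nonneg)
  moreover have "(\<Sum>m\<in>{Suc p..<N}. g m) < 1"
  proof -
    have "(\<Sum>m\<in>{Suc p..<N}. g m) \<le> (\<Sum>m\<in>{Suc p..<N}. zeta_term (\<lambda>_. 1) u y m) * 2^j"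
      unfolding sum_distrib_right using q
      by (intro sum_mono) (simp add: g_def zeta_term_le_one zeta_term_nonneg[OF binary_seq_one])
    also have "\<dots> < (1/2)^j * 2^j"
      using sum_zeta_term_one_tail_less[of p N u y] p by (simp add: j_def)
    finally show ?thesis
      by (simp add: power_one_over)
  qed
  ultimately show ?thesis
    using decomp digit even binary_seqD[OF q, of p]
    by (intro binary_digit_eqI[symmetric, where z = "(\<Sum>m<p. g m) / 2"]) (auto simp: j_def)
qed

lemma zeta_trunc_window:
  assumes q: "binary_seq q" and k: "k \<le> hits u y N" and a: "zeta_seq q u y \<in> {a..a+(1/2)^k}"
  obtains i :: int where "i \<in> {0..<4}" "zeta_trunc q u y k N = of_int (\<lceil>a * 2^k - 2\<rceil> + i) / 2^k"
proof -
  obtain z :: int where z: "zeta_trunc q u y k N = of_int z / 2^k"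
    using zeta_trunc_grid[OF q, of u y k N] by (auto elim!: Ints_cases simp: field_simps)
  have "of_int z / 2^k \<le> a + 1 / 2^k" "a \<le> of_int z / 2^k + 2 / 2^k"
    using zeta_trunc_approx[OF q k] a z by (auto simp: power_one_over)
  then have bounds: "of_int z \<le> a * 2^k + 1" "a * 2^k - 2 \<le> of_int z"
    by (simp_all add: field_simps)
  have "\<lceil>a * 2^k - 2\<rceil> \<le> z"
    using bounds(2) by (rule ceiling_le)
  moreover have "real_of_int z < of_int (\<lceil>a * 2^k - 2\<rceil> + 4)"
    using bounds(1) le_of_int_ceiling[of "a * 2^k"] by simp linarith
  ultimately show thesis
    using z by (intro that[of "z - \<lceil>a * 2^k - 2\<rceil>"]) auto
qed

definition first_elems :: "nat \<Rightarrow> nat set \<Rightarrow> nat set" where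
  "first_elems k B = {n\<in>B. card (B \<inter> {1..<n}) < k}"

lemma card_first_elems_upto:
  "card (first_elems k B \<inter> {1..m}) = min k (card (B \<inter> {1..m}))"
proof (induction m)
  case (Suc m)
  have "first_elems k B \<inter> {1..Suc m} =
      first_elems k B \<inter> {1..m} \<union> (if Suc m \<in> B \<and> card (B \<inter> {1..m}) < k then {Suc m} else {})"
    by (auto simp: first_elems_def le_Suc_eq atLeastLessThanSuc_atLeastAtMost)
  moreover have "B \<inter> {1..Suc m} = B \<inter> {1..m} \<union> (if Suc m \<in> B then {Suc m} else {})"
    by (auto simp: le_Suc_eq)
  ultimately show ?case
    using Suc.IH by auto
qed simp

lemma card_first_elems:
  assumes "B \<subseteq> {1..N}" "k \<le> card B"
  shows "card (first_elems k B) = k"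
proof -
  have "first_elems k B \<inter> {1..N} = first_elems k B" "B \<inter> {1..N} = B"
    using assms(1) by (auto simp: first_elems_def)
  then show ?thesis
    using card_first_elems_upto[of k B N] assms(2) by simp
qed

lemma card_first_elems_union:
  assumes "B \<subseteq> {1..N}" "k \<le> card B"
  shows "2 * k - card (B \<inter> {1..k}) \<le> card ({1..k} \<union> first_elems k B)"
proof -
  have "finite B" using assms(1) finite_subset by blast
  then have "card {1..k} + card (first_elems k B) =
      card ({1..k} \<union> first_elems k B) + card ({1..k} \<inter> first_elems k B)"
    by (intro card_Un_Int) (auto simp: first_elems_def)
  moreover have "card ({1..k} \<inter> first_elems k B) \<le> card (B \<inter> {1..k})"
    using \<open>finite B\<close> by (intro card_mono) (auto simp: first_elems_def)
  ultimately show ?thesis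
    using card_first_elems[OF assms] by simp
qed

text \<open>The values forced on Q at {1..k} by the grid point z1 / 2^k of zeta 1, and at
  first_elems k B by the grid point zx / 2^k of zeta x.\<close>

definition square_digits :: "nat \<Rightarrow> nat set \<Rightarrow> int \<Rightarrow> int \<Rightarrow> nat \<Rightarrow> real" where
  "square_digits k B z1 zx n =
     (if n \<le> k then binary_digit (of_int z1 / 2^k) (n - 1)
      else binary_digit (of_int zx / 2^k) (card (B \<inter> {1..<n})))"

lemma digits_of_zeta_one:
  assumes q: "binary_seq q" and u: "\<And>n. 1 \<le> n \<Longrightarrow> u n \<le> 1" and "k \<le> N"
    and z: "zeta_seq q u 1 \<in> {b..b+(1/2)^k}"
  obtains j where "j \<in> {0..<4}"
    "\<And>n. n \<in> {1..k} \<Longrightarrow> q n = binary_digit (of_int (\<lceil>b * 2^k - 2\<rceil> + j) / 2^k) (n - 1)"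
proof -
  have hits_1: "hits u 1 m = m" for m
    using u by (rule hits_all)
  then have "k \<le> hits u 1 N"
    using \<open>k \<le> N\<close> by simp
  then obtain j where j: "j \<in> {0..<4}" "zeta_trunc q u 1 k N = of_int (\<lceil>b * 2^k - 2\<rceil> + j) / 2^k"
    using z by (rule zeta_trunc_window[OF q])
  have "q n = binary_digit (of_int (\<lceil>b * 2^k - 2\<rceil> + j) / 2^k) (n - 1)" if n: "n \<in> {1..k}" for n
  proof -
    obtain p where "n = Suc p"
      using n by (cases n) auto
    then show ?thesis
      using binary_digit_zeta_trunc[OF q, of p N u 1 k] u[of n] n \<open>k \<le> N\<close> j(2) by (simp add: hits_1)
  qed
  with j(1) show thesis
    by (rule that)
qed

lemma digits_of_zeta_first_elems:
  assumes q: "binary_seq q" and B: "B = {n\<in>{1..N}. u n \<le> y}" "k \<le> card B"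
    and z: "zeta_seq q u y \<in> {a..a+(1/2)^k}"
  obtains i where "i \<in> {0..<4}"
    "\<And>n. n \<in> first_elems k B \<Longrightarrow>
       q n = binary_digit (of_int (\<lceil>a * 2^k - 2\<rceil> + i) / 2^k) (card (B \<inter> {1..<n}))"
proof -
  have hits_y: "hits u y m = card (B \<inter> {1..m})" if "m \<le> N" for m
    using that unfolding B(1) by (rule hits_eq_card)
  have "B \<inter> {1..N} = B"
    using B(1) by auto
  then have "k \<le> hits u y N"
    using hits_y[of N] B(2) by simp
  then obtain i where i: "i \<in> {0..<4}" "zeta_trunc q u y k N = of_int (\<lceil>a * 2^k - 2\<rceil> + i) / 2^k"
    using z by (rule zeta_trunc_window[OF q])
  have "q n = binary_digit (of_int (\<lceil>a * 2^k - 2\<rceil> + i) / 2^k) (card (B \<inter> {1..<n}))"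
    if n: "n \<in> first_elems k B" for n
  proof -
    have "n \<in> B" "card (B \<inter> {1..<n}) < k"
      using n by (auto simp: first_elems_def)
    then obtain p where p: "n = Suc p" "Suc p \<le> N" "u (Suc p) \<le> y"
      using B(1) by (cases n) auto
    then have "hits u y p = card (B \<inter> {1..<n})"
      using hits_y[of p] by (simp add: atLeastLessThanSuc_atLeastAtMost)
    then show ?thesis
      using binary_digit_zeta_trunc[OF q, of p N u y k] p \<open>card (B \<inter> {1..<n}) < k\<close> i(2) by simp
  qed
  with i(1) show thesis
    by (rule that)
qed

lemma square_determines_digits:
  assumes q: "binary_seq q" and u: "\<And>n. 1 \<le> n \<Longrightarrow> u n \<le> 1" and "k \<le> N"
    and B: "B = {n\<in>{1..N}. u n \<le> x}" "k \<le> card B"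
    and zx: "zeta_seq q u x \<in> {a..a+(1/2)^k}" and z1: "zeta_seq q u 1 \<in> {b..b+(1/2)^k}"
  obtains i j where "i \<in> {0..<4}" "j \<in> {0..<4}"
    "\<And>n. n \<in> {1..k} \<union> first_elems k B \<Longrightarrow>
       q n = square_digits k B (\<lceil>b * 2^k - 2\<rceil> + j) (\<lceil>a * 2^k - 2\<rceil> + i) n"
proof -
  obtain i where i: "i \<in> {0..<4}" "\<And>n. n \<in> first_elems k B \<Longrightarrow>
      q n = binary_digit (of_int (\<lceil>a * 2^k - 2\<rceil> + i) / 2^k) (card (B \<inter> {1..<n}))"
    by (rule digits_of_zeta_first_elems[OF q B zx]) auto
  obtain j where j: "j \<in> {0..<4}"
    "\<And>n. n \<in> {1..k} \<Longrightarrow> q n = binary_digit (of_int (\<lceil>b * 2^k - 2\<rceil> + j) / 2^k) (n - 1)"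
    by (rule digits_of_zeta_one[OF q u \<open>k \<le> N\<close> z1]) auto
  have "q n = square_digits k B (\<lceil>b * 2^k - 2\<rceil> + j) (\<lceil>a * 2^k - 2\<rceil> + i) n"
    if "n \<in> {1..k} \<union> first_elems k B" for n
    using that i(2) j(2) B(1) by (cases "n \<le> k") (auto simp: square_digits_def first_elems_def)
  with i(1) j(1) show thesis
    by (rule that)
qed

definition pattern_weight :: "real \<Rightarrow> nat \<Rightarrow> nat set \<Rightarrow> real" where
  "pattern_weight x N B = (\<Prod>n\<in>B. x) * (\<Prod>n\<in>{1..N} - B. 1 - x)"

lemma pattern_weight_eq_prod:
  assumes "B \<subseteq> {1..N}"
  shows "pattern_weight x N B = (\<Prod>n\<in>{1..N}. if n \<in> B then x else 1 - x)"
proof -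
  have "{1..N} \<inter> {n. n \<in> B} = B" "{1..N} \<inter> - {n. n \<in> B} = {1..N} - B"
    using assms by auto
  then show ?thesis
    by (simp add: pattern_weight_def prod.If_cases del: prod_constant)
qed

lemma pattern_weight_nonneg: "0 \<le> x \<Longrightarrow> x \<le> 1 \<Longrightarrow> 0 \<le> pattern_weight x N B"
  by (simp add: pattern_weight_def prod_nonneg)

lemma prod_if_eq_power_card:
  "finite A \<Longrightarrow> (\<Prod>n\<in>A. if P n then (c::real) else 1) = c ^ card {n\<in>A. P n}"
  by (simp add: prod.If_cases Int_def)

lemma sum_pattern_weight_mult_prod:
  "(\<Sum>B\<in>Pow {1..N}. pattern_weight x N B * (\<Prod>n\<in>B. f n)) = (\<Prod>n\<in>{1..N}. x * f n + (1 - x))"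
  by (subst prod_add) (auto simp: pattern_weight_def prod.distrib ac_simps intro!: sum.cong)

lemma sum_pattern_weight_half_power:
  assumes "k \<le> N"
  shows "(\<Sum>B\<in>Pow {1..N}. pattern_weight x N B * (1/2)^(2 * k - card (B \<inter> {1..k}))) = ((1 + x) / 4)^k"
proof -
  have eq: "(1/2::real)^(2 * k - card (B \<inter> {1..k})) = (1/4)^k * (\<Prod>n\<in>B. if n \<le> k then 2 else 1)"
    if "B \<in> Pow {1..N}" for B
  proof -
    have "finite B" "{n\<in>B. n \<le> k} = B \<inter> {1..k}"
      using that finite_subset by auto
    moreover have "card (B \<inter> {1..k}) \<le> k"
      using card_mono[of "{1..k}" "B \<inter> {1..k}"] by auto
    moreover have "(2::real)^card (B \<inter> {1..k}) * 2^(2 * k - card (B \<inter> {1..k})) = 4^k"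
      using \<open>card (B \<inter> {1..k}) \<le> k\<close> by (simp flip: power_add add: power_mult)
    ultimately show ?thesis
      by (simp add: prod_if_eq_power_card power_one_over divide_simps)
  qed
  have "(\<Sum>B\<in>Pow {1..N}. pattern_weight x N B * (1/2)^(2 * k - card (B \<inter> {1..k})))
      = (1/4)^k * (\<Sum>B\<in>Pow {1..N}. pattern_weight x N B * (\<Prod>n\<in>B. if n \<le> k then 2 else 1))"
    unfolding sum_distrib_left using eq by (intro sum.cong refl) (simp add: ac_simps)
  also have "\<dots> = (1/4)^k * (\<Prod>n\<in>{1..N}. if n \<le> k then 1 + x else 1)"
    unfolding sum_pattern_weight_mult_prod by (auto intro!: prod.cong)
  also have "\<dots> = (1/4)^k * (1 + x)^card {n\<in>{1..N}. n \<le> k}"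
    by (simp only: prod_if_eq_power_card[OF finite_atLeastAtMost])
  also have "{n\<in>{1..N}. n \<le> k} = {1..k}"
    using assms by auto
  finally show ?thesis
    by (simp add: power_divide)
qed

lemma sum_pattern_weight_card_less:
  assumes "k \<le> N" "0 \<le> x" "x \<le> 1"
  shows "(\<Sum>B\<in>Pow {1..N}. if card B < k then pattern_weight x N B else 0) \<le> 2^k * (1 - x/2)^(N - k)"
proof -
  have "(if card B < k then pattern_weight x N B else 0)
      \<le> 2^k * (pattern_weight x N B * (\<Prod>n\<in>B. if k < n then 1/2 else 1))"
    if "B \<in> Pow {1..N}" for B
  proof -
    have "finite B" using that finite_subset by auto
    have "(if card B < k then 1 else 0) \<le> 2^k * (1/2::real) ^ card {n\<in>B. k < n}"
    proof (cases "card B < k")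
      case True
      have "card {n\<in>B. k < n} \<le> k"
        using True card_mono[OF \<open>finite B\<close>, of "{n\<in>B. k < n}"] by auto
      then have "(1/2::real)^k \<le> (1/2) ^ card {n\<in>B. k < n}"
        by (intro power_decreasing) auto
      then show ?thesis
        using True by (simp add: power_one_over field_simps)
    qed simp
    from mult_left_mono[OF this pattern_weight_nonneg[OF assms(2,3), of N B]]
    show ?thesis
      using \<open>finite B\<close> by (cases "card B < k") (simp_all add: prod_if_eq_power_card ac_simps)
  qed
  then have "(\<Sum>B\<in>Pow {1..N}. if card B < k then pattern_weight x N B else 0)
      \<le> 2^k * (\<Sum>B\<in>Pow {1..N}. pattern_weight x N B * (\<Prod>n\<in>B. if k < n then 1/2 else 1))"
    unfolding sum_distrib_left by (rule sum_mono)
  also have "\<dots> = 2^k * (\<Prod>n\<in>{1..N}. if k < n then 1 - x/2 else 1)"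
    unfolding sum_pattern_weight_mult_prod by (auto intro!: prod.cong)
  also have "\<dots> = 2^k * (1 - x/2)^card {n\<in>{1..N}. k < n}"
    by (simp only: prod_if_eq_power_card[OF finite_atLeastAtMost])
  also have "{n\<in>{1..N}. k < n} = {k<..N}"
    using assms by auto
  finally show ?thesis
    by simp
qed

section \<open>The probabilistic estimate\<close>

lemma half_power_hits: "(1/2::real)^hits u y m = (\<Prod>j\<in>{1..m}. if u j \<le> y then 1/2 else 1)"
  by (simp add: hits_def prod_if_eq_power_card)

locale zeta_model = prob_space M for M :: "'a measure" +
  fixes Q U :: "nat \<Rightarrow> 'a \<Rightarrow> real" and x :: real
  assumes indep: "indep_vars (\<lambda>_. borel) (\<lambda>i. case i of Inl n \<Rightarrow> Q n | Inr n \<Rightarrow> U n)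
                    (Inl ` {1..} \<union> Inr ` {1..})"
    and Q_vals: "\<And>n \<omega>. n \<ge> 1 \<Longrightarrow> \<omega> \<in> space M \<Longrightarrow> Q n \<omega> \<in> {0, 1}"
    and Q_half: "\<And>n. n \<ge> 1 \<Longrightarrow> measure M {\<omega> \<in> space M. Q n \<omega> = 1} = 1/2"
    and U_unif: "\<And>n. n \<ge> 1 \<Longrightarrow> distr M lborel (U n) = uniform_measure lborel {0..1}"
    and x: "0 < x" "x < 1"
begin

lemma Q_measurable: "n \<ge> 1 \<Longrightarrow> Q n \<in> borel_measurable M"
  using indep unfolding indep_vars_def2 by (auto dest: bspec[of _ _ "Inl n"])

lemma U_measurable: "n \<ge> 1 \<Longrightarrow> U n \<in> borel_measurable M"
  using indep unfolding indep_vars_def2 by (auto dest: bspec[of _ _ "Inr n"])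

lemma prob_U_preimage:
  assumes "n \<ge> 1" "S \<in> sets borel"
  shows "prob (U n -` S \<inter> space M) = measure lborel ({0..1} \<inter> S)"
proof -
  have "prob (U n -` S \<inter> space M) = measure (distr M lborel (U n)) S"
    using assms U_measurable[OF assms(1)] by (simp add: measure_distr)
  also have "\<dots> = measure lborel ({0..1} \<inter> S)"
    using assms by (simp add: U_unif measure_uniform_measure)
  finally show ?thesis .
qed

lemma prob_U_le: "n \<ge> 1 \<Longrightarrow> prob (U n -` {..x} \<inter> space M) = x"
  using prob_U_preimage[of n "{..x}"] x by simp

lemma prob_U_gt:
  assumes "n \<ge> 1"
  shows "prob (U n -` {x<..} \<inter> space M) = 1 - x"
proof -
  have "{0..1} \<inter> {x<..} = {x<..1::real}"
    using x by auto
  then show ?thesis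
    using prob_U_preimage[OF assms, of "{x<..}"] x by simp
qed

lemma AE_U_le_1: "AE \<omega> in M. \<forall>n\<ge>1. U n \<omega> \<le> 1"
proof -
  have "AE \<omega> in M. \<omega> \<in> U n -` {..1} \<inter> space M" if "n \<ge> 1" for n
    using prob_U_preimage[OF that, of "{..1}"] by (intro AE_prob_1) simp
  then show ?thesis
    by (subst AE_all_countable) auto
qed

lemma prob_Q_eq_le_half:
  assumes "n \<ge> 1"
  shows "prob (Q n -` {c} \<inter> space M) \<le> 1/2"
proof -
  have ev: "{\<omega> \<in> space M. Q n \<omega> = 1} \<in> events"
    using Q_measurable[OF assms] by measurable
  consider "c = 1" | "c = 0" | "c \<notin> {0, 1}" by blast
  then show ?thesis
  proof cases
    case 1
    then have "Q n -` {c} \<inter> space M = {\<omega> \<in> space M. Q n \<omega> = 1}" by auto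
    then show ?thesis using Q_half[OF assms] by simp
  next
    case 2
    then have "Q n -` {c} \<inter> space M = space M - {\<omega> \<in> space M. Q n \<omega> = 1}"
      using Q_vals[OF assms] by auto
    then show ?thesis using Q_half[OF assms] prob_compl[OF ev] by simp
  next
    case 3
    then have "Q n -` {c} \<inter> space M = {}" using Q_vals[OF assms] by auto
    then show ?thesis by simp
  qed
qed

definition pattern_event :: "nat \<Rightarrow> nat set \<Rightarrow> 'a set" where
  "pattern_event N B = {\<omega>\<in>space M. \<forall>n\<in>{1..N}. U n \<omega> \<le> x \<longleftrightarrow> n \<in> B}"

definition digit_event :: "nat set \<Rightarrow> (nat \<Rightarrow> real) \<Rightarrow> 'a set" where
  "digit_event F c = {\<omega>\<in>space M. \<forall>n\<in>F. Q n \<omega> = c n}"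

lemma prob_pattern_digit_event:
  assumes F: "finite F" "F \<subseteq> {1..}" and B: "B \<subseteq> {1..N}" and "1 \<le> N"
  shows "prob (pattern_event N B \<inter> digit_event F c) \<le> (1/2)^card F * pattern_weight x N B"
proof -
  define X where "X = (\<lambda>i. case i of Inl n \<Rightarrow> Q n | Inr n \<Rightarrow> U n)"
  define A where "A i = (case i of Inl n \<Rightarrow> {c n} | Inr n \<Rightarrow> if n \<in> B then {..x} else {x<..})" for i
  define J where "J = Inl ` F \<union> Inr ` {1..N}"
  have "pattern_event N B \<inter> digit_event F c = (\<Inter>i\<in>J. X i -` A i \<inter> space M)"
  proof (intro equalityI subsetI)
    fix \<omega> assume \<omega>: "\<omega> \<in> (\<Inter>i\<in>J. X i -` A i \<inter> space M)"
    then have "\<omega> \<in> space M"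
      using \<open>1 \<le> N\<close> by (auto simp: J_def)
    moreover have "U n \<omega> \<le> x \<longleftrightarrow> n \<in> B" if "n \<in> {1..N}" for n
      using INT_D[OF \<omega>, of "Inr n"] that by (auto simp: J_def X_def A_def split: if_splits)
    moreover have "Q n \<omega> = c n" if "n \<in> F" for n
      using INT_D[OF \<omega>, of "Inl n"] that by (auto simp: J_def X_def A_def)
    ultimately show "\<omega> \<in> pattern_event N B \<inter> digit_event F c"
      by (simp add: pattern_event_def digit_event_def)
  qed (auto simp: pattern_event_def digit_event_def J_def X_def A_def not_le)
  also have "prob \<dots> = (\<Prod>i\<in>J. prob (X i -` A i \<inter> space M))"
    using indep F \<open>1 \<le> N\<close> unfolding X_def
    by (intro indep_varsD) (auto simp: J_def A_def)
  also have "\<dots> = (\<Prod>n\<in>F. prob (Q n -` {c n} \<inter> space M)) *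
      (\<Prod>n\<in>{1..N}. prob (U n -` (if n \<in> B then {..x} else {x<..}) \<inter> space M))"
    unfolding J_def using F
    by (subst prod.union_disjoint) (auto simp: prod.reindex X_def A_def)
  also have "(\<Prod>n\<in>{1..N}. prob (U n -` (if n \<in> B then {..x} else {x<..}) \<inter> space M))
      = pattern_weight x N B"
    using B by (auto simp: pattern_weight_eq_prod prob_U_le prob_U_gt intro!: prod.cong)
  also have "(\<Prod>n\<in>F. prob (Q n -` {c n} \<inter> space M)) \<le> (\<Prod>n\<in>F. 1/2)"
    using F prob_Q_eq_le_half by (intro prod_mono) force
  finally show ?thesis
    using pattern_weight_nonneg[of x N B] x by (simp add: mult_right_mono)
qed

lemma pattern_event_in_events: "pattern_event N B \<in> events"
  unfolding pattern_event_def
proof (rule sets.sets_Collect_finite_All)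
  fix n assume "n \<in> {1..N}"
  then have [measurable]: "U n \<in> borel_measurable M"
    using U_measurable by auto
  show "{\<omega> \<in> space M. U n \<omega> \<le> x \<longleftrightarrow> n \<in> B} \<in> events"
    by measurable
qed simp

lemma digit_event_in_events: "finite F \<Longrightarrow> F \<subseteq> {1..} \<Longrightarrow> digit_event F c \<in> events"
  unfolding digit_event_def
proof (rule sets.sets_Collect_finite_All)
  fix n assume "F \<subseteq> {1..}" "n \<in> F"
  then have [measurable]: "Q n \<in> borel_measurable M"
    using Q_measurable by auto
  show "{\<omega> \<in> space M. Q n \<omega> = c n} \<in> events"
    by measurable
qed

lemma zeta_measurable: "zeta Q U y \<in> borel_measurable M"
proof -
  have "(\<lambda>\<omega>. zeta_term (\<lambda>n. Q n \<omega>) (\<lambda>n. U n \<omega>) y m) \<in> borel_measurable M" for m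
  proof -
    have [measurable]: "Q (Suc m) \<in> borel_measurable M" "U (Suc m) \<in> borel_measurable M"
      using Q_measurable U_measurable by auto
    have [measurable]: "(\<lambda>\<omega>. \<Prod>j\<in>{1..m}. if U j \<omega> \<le> y then 1/2 else (1::real)) \<in> borel_measurable M"
    proof (rule borel_measurable_prod)
      fix j assume "j \<in> {1..m}"
      then have [measurable]: "U j \<in> borel_measurable M"
        using U_measurable by auto
      show "(\<lambda>\<omega>. if U j \<omega> \<le> y then 1/2 else (1::real)) \<in> borel_measurable M"
        by measurable
    qed
    show ?thesis
      unfolding zeta_term_def half_power_hits by measurable
  qed
  then show ?thesis
    unfolding zeta_eq_zeta_seq[abs_def] zeta_seq_def by (rule borel_measurable_suminf)
qed

definition square_event :: "real \<Rightarrow> real \<Rightarrow> nat \<Rightarrow> 'a set" where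
  "square_event a b k =
     {\<omega>\<in>space M. zeta Q U x \<omega> \<in> {a..a+(1/2)^k} \<and> zeta Q U 1 \<omega> \<in> {b..b+(1/2)^k}}"

lemma square_event_in_events: "square_event a b k \<in> events"
  using zeta_measurable[of x] zeta_measurable[of 1] unfolding square_event_def by measurable

lemma AE_square_pattern_imp_digits:
  assumes B: "B \<subseteq> {1..N}" "k \<le> card B" and "k \<le> N"
  shows "AE \<omega> in M. \<omega> \<in> square_event a b k \<inter> pattern_event N B \<longrightarrow>
    \<omega> \<in> (\<Union>(i, j)\<in>{0..<4} \<times> {0..<4}. pattern_event N B \<inter> digit_event ({1..k} \<union> first_elems k B)
       (square_digits k B (\<lceil>b * 2^k - 2\<rceil> + j) (\<lceil>a * 2^k - 2\<rceil> + i)))"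
  using AE_U_le_1
proof eventually_elim
  case (elim \<omega>)
  show ?case
  proof
    assume \<omega>: "\<omega> \<in> square_event a b k \<inter> pattern_event N B"
    then have "B = {n\<in>{1..N}. U n \<omega> \<le> x}"
      using B by (auto simp: pattern_event_def)
    then obtain i j where ij: "i \<in> {0..<4}" "j \<in> {0..<4}" and "\<And>n. n \<in> {1..k} \<union> first_elems k B \<Longrightarrow>
        Q n \<omega> = square_digits k B (\<lceil>b * 2^k - 2\<rceil> + j) (\<lceil>a * 2^k - 2\<rceil> + i) n"
      using square_determines_digits[of "\<lambda>n. Q n \<omega>" "\<lambda>n. U n \<omega>" k N B x a b] \<omega> elim B
        \<open>k \<le> N\<close> Q_vals
      by (auto simp: binary_seq_def square_event_def zeta_eq_zeta_seq)
    then have "\<omega> \<in> pattern_event N B \<inter> digit_event ({1..k} \<union> first_elems k B)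
       (square_digits k B (\<lceil>b * 2^k - 2\<rceil> + j) (\<lceil>a * 2^k - 2\<rceil> + i))"
      using \<omega> by (auto simp: digit_event_def pattern_event_def)
    with ij show "\<omega> \<in> (\<Union>(i, j)\<in>{0..<4} \<times> {0..<4}. pattern_event N B \<inter>
       digit_event ({1..k} \<union> first_elems k B) (square_digits k B (\<lceil>b * 2^k - 2\<rceil> + j) (\<lceil>a * 2^k - 2\<rceil> + i)))"
      by (intro UN_I[of "(i, j)"]) auto
  qed
qed

lemma prob_square_pattern_le:
  assumes B: "B \<subseteq> {1..N}" and "k \<le> N" "1 \<le> N"
  shows "prob (square_event a b k \<inter> pattern_event N B)
    \<le> (if card B < k then pattern_weight x N B else 0) +
       16 * (pattern_weight x N B * (1/2)^(2 * k - card (B \<inter> {1..k})))"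
proof (cases "card B < k")
  case True
  have "prob (square_event a b k \<inter> pattern_event N B) \<le> prob (pattern_event N B \<inter> digit_event {} c)"
    by (intro finite_measure_mono) (auto simp: digit_event_def pattern_event_in_events)
  also have "\<dots> \<le> pattern_weight x N B"
    using prob_pattern_digit_event[of "{}" B N c] B \<open>1 \<le> N\<close> by simp
  finally show ?thesis
    using True pattern_weight_nonneg[of x N B] x by (auto intro!: add_increasing2)
next
  case False
  define F where "F = {1..k} \<union> first_elems k B"
  define D where "D = (\<lambda>(i, j). pattern_event N B \<inter>
    digit_event F (square_digits k B (\<lceil>b * 2^k - 2\<rceil> + j) (\<lceil>a * 2^k - 2\<rceil> + i)))"
  define I where "I = {0..<4::int} \<times> {0..<4::int}"
  have F: "finite F" "F \<subseteq> {1..}"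
    using B finite_subset[OF B] by (auto simp: F_def first_elems_def)
  have D: "D p \<in> events" for p
    using F by (auto simp: D_def pattern_event_in_events digit_event_in_events split: prod.split)
  have "k \<le> card B"
    using False by simp
  have "AE \<omega> in M. \<omega> \<in> square_event a b k \<inter> pattern_event N B \<longrightarrow> \<omega> \<in> (\<Union>p\<in>I. D p)"
    unfolding D_def I_def F_def using B \<open>k \<le> card B\<close> \<open>k \<le> N\<close> by (rule AE_square_pattern_imp_digits)
  then have "emeasure M (square_event a b k \<inter> pattern_event N B) \<le> emeasure M (\<Union>p\<in>I. D p)"
    using D by (intro emeasure_mono_AE) (auto simp: I_def)
  then have "prob (square_event a b k \<inter> pattern_event N B) \<le> prob (\<Union>p\<in>I. D p)"
    by (simp add: emeasure_eq_measure)
  also have "\<dots> \<le> (\<Sum>p\<in>I. prob (D p))"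
    using D by (intro measure_UNION_le) (auto simp: I_def)
  also have "\<dots> \<le> (\<Sum>p\<in>I. (1/2)^card F * pattern_weight x N B)"
    using F B \<open>1 \<le> N\<close> by (intro sum_mono) (auto simp: D_def prob_pattern_digit_event)
  also have "\<dots> = 16 * ((1/2)^card F * pattern_weight x N B)"
    by (simp add: I_def)
  also have "(1/2::real)^card F \<le> (1/2)^(2 * k - card (B \<inter> {1..k}))"
    using card_first_elems_union[OF B] False by (intro power_decreasing) (auto simp: F_def)
  finally show ?thesis
    using False pattern_weight_nonneg[of x N B] x by (simp add: mult_right_mono ac_simps)
qed

lemma prob_square_le_approx:
  assumes "k \<le> N" "1 \<le> N"
  shows "prob (square_event a b k) \<le> 16 * ((1 + x) / 4)^k + 2^k * (1 - x/2)^(N - k)"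
proof -
  have "square_event a b k \<subseteq> (\<Union>B\<in>Pow {1..N}. square_event a b k \<inter> pattern_event N B)"
  proof
    fix \<omega> assume "\<omega> \<in> square_event a b k"
    then show "\<omega> \<in> (\<Union>B\<in>Pow {1..N}. square_event a b k \<inter> pattern_event N B)"
      by (intro UN_I[of "{n\<in>{1..N}. U n \<omega> \<le> x}"]) (auto simp: square_event_def pattern_event_def)
  qed
  then have "prob (square_event a b k) \<le> prob (\<Union>B\<in>Pow {1..N}. square_event a b k \<inter> pattern_event N B)"
    by (intro finite_measure_mono) (auto intro: square_event_in_events pattern_event_in_events)
  also have "\<dots> \<le> (\<Sum>B\<in>Pow {1..N}. prob (square_event a b k \<inter> pattern_event N B))"
    by (intro measure_UNION_le) (auto intro: square_event_in_events pattern_event_in_events)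
  also have "\<dots> \<le> (\<Sum>B\<in>Pow {1..N}. (if card B < k then pattern_weight x N B else 0) +
      16 * (pattern_weight x N B * (1/2)^(2 * k - card (B \<inter> {1..k}))))"
    by (intro sum_mono prob_square_pattern_le) (use assms in auto)
  also have "\<dots> = (\<Sum>B\<in>Pow {1..N}. if card B < k then pattern_weight x N B else 0) +
      16 * (\<Sum>B\<in>Pow {1..N}. pattern_weight x N B * (1/2)^(2 * k - card (B \<inter> {1..k})))"
    by (simp only: sum.distrib sum_distrib_left)
  also have "\<dots> \<le> 2^k * (1 - x/2)^(N - k) + 16 * ((1 + x) / 4)^k"
    using sum_pattern_weight_card_less[of k N x] sum_pattern_weight_half_power[of k N x] assms x
    by simp
  finally show ?thesis by simp
qed

lemma prob_square_le: "prob (square_event a b k) \<le> 16 * ((1 + x) / 4)^k"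
proof (rule LIMSEQ_le_const)
  have "(\<lambda>n. (1 - x/2)^Suc n) \<longlonglongrightarrow> 0"
    using x by (intro LIMSEQ_Suc LIMSEQ_power_zero) auto
  then have "(\<lambda>n. 16 * ((1 + x) / 4)^k + 2^k * (1 - x/2)^Suc n) \<longlonglongrightarrow> 16 * ((1 + x) / 4)^k + 2^k * 0"
    by (intro tendsto_add tendsto_mult tendsto_const)
  then show "(\<lambda>n. 16 * ((1 + x) / 4)^k + 2^k * (1 - x/2)^Suc n) \<longlonglongrightarrow> 16 * ((1 + x) / 4)^k"
    by simp
  show "\<exists>N. \<forall>n\<ge>N. prob (square_event a b k) \<le> 16 * ((1 + x) / 4)^k + 2^k * (1 - x/2)^Suc n"
    using prob_square_le_approx[of k "k + Suc _"] by auto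
qed

lemma zeta_pair_measurable: "(\<lambda>\<omega>. (zeta Q U x \<omega>, zeta Q U 1 \<omega>)) \<in> borel_measurable M"
  using zeta_measurable[of x] zeta_measurable[of 1] by measurable

lemma measure_distr_square_le:
  "measure (distr M borel (\<lambda>\<omega>. (zeta Q U x \<omega>, zeta Q U 1 \<omega>))) ({a..a+(1/2)^k} \<times> {b..b+(1/2)^k})
     \<le> 16 * ((1/2)^k) powr (2 - ln (1 + x) / ln 2)"
proof -
  have "measure (distr M borel (\<lambda>\<omega>. (zeta Q U x \<omega>, zeta Q U 1 \<omega>))) ({a..a+(1/2)^k} \<times> {b..b+(1/2)^k})
      = prob (square_event a b k)"
  proof -
    have "(\<lambda>\<omega>. (zeta Q U x \<omega>, zeta Q U 1 \<omega>)) -` ({a..a+(1/2)^k} \<times> {b..b+(1/2)^k}) \<inter> space M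
        = square_event a b k"
      by (auto simp: square_event_def)
    then show ?thesis
      using zeta_pair_measurable by (subst measure_distr) (auto intro: borel_closed closed_Times)
  qed
  also have "\<dots> \<le> 16 * ((1 + x) / 4)^k"
    by (rule prob_square_le)
  also have "((1 + x) / 4)^k = ((1/2) powr (2 - ln (1 + x) / ln 2))^k"
    using x by (simp add: half_powr_two_minus_log)
  also have "\<dots> = ((1/2)^k) powr (2 - ln (1 + x) / ln 2)"
    by (rule power_powr_swap[symmetric]) simp
  finally show ?thesis .
qed

end

theorem theorem7p3:
  fixes M :: "'a measure"
    and Q U :: "nat \<Rightarrow> 'a \<Rightarrow> real"
    and x :: real
  assumes "prob_space M"
    and indep: "prob_space.indep_vars M (\<lambda>_. borel)
                  (\<lambda>i. case i of Inl n \<Rightarrow> Q n | Inr n \<Rightarrow> U n)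
                  (Inl ` {1..} \<union> Inr ` {1..})"
    and Q_vals: "\<And>n \<omega>. n \<ge> 1 \<Longrightarrow> \<omega> \<in> space M \<Longrightarrow> Q n \<omega> \<in> {0, 1}"
    and Q_half: "\<And>n. n \<ge> 1 \<Longrightarrow> measure M {\<omega> \<in> space M. Q n \<omega> = 1} = 1/2"
    and U_unif: "\<And>n. n \<ge> 1 \<Longrightarrow> distr M lborel (U n) = uniform_measure lborel {0..1}"
    and x: "0 < x" "x < 1"
  shows "hausdorff_dim_measure
           (distr M borel (\<lambda>\<omega>. (zeta Q U x \<omega>, zeta Q U 1 \<omega>)))
         \<ge> ereal (2 - ln (1 + x) / ln 2)"
proof -
  interpret zeta_model M Q U x
    using assms by (intro zeta_model.intro zeta_model_axioms.intro) auto
  define \<mu> where "\<mu> = distr M borel (\<lambda>\<omega>. (zeta Q U x \<omega>, zeta Q U 1 \<omega>))"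
  define s where "s = 2 - ln (1 + x) / ln 2"
  have "ln (1 + x) / ln 2 < 1"
    using x by simp
  then have "0 < s"
    unfolding s_def by linarith
  have "prob_space \<mu>"
    unfolding \<mu>_def using zeta_pair_measurable by (rule prob_space_distr)
  then have "finite_measure \<mu>"
    by (rule prob_space.finite_measure)
  have "measure \<mu> C \<le> 16 * 4 powr s * diameter C powr s"
    if "bounded C" "diameter C \<le> 1/2" for C
    using \<open>finite_measure \<mu>\<close> measure_distr_square_le \<open>0 < s\<close> that
    by (intro measure_le_diameter_powr_of_squares) (auto simp: \<mu>_def s_def)
  then have "ereal s \<le> hausdorff_dim_measure \<mu>"
    using \<open>finite_measure \<mu>\<close>
    by (intro mass_distribution_principle[where \<delta> = "1/2"]) (auto simp: \<mu>_def)
  then show ?thesis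
    by (simp add: \<mu>_def s_def)
qed

end
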